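(* Let $n\ge1$; for $i\in[n]$ let $d_i\ge1$, $p_{i0}<\cdots<p_{id_i}$ reals, $f_i:\{p_{i0},\dots,p_{id_i}\}\to[L_i,U_i]$, and let $\phi:\prod_i[L_i,U_i]\to\mathbb{R}$ be supermodular. Let $\sigma=(\sigma_1,\dots,\sigma_n)$, each $\sigma_i$ a permutation of $\{0,\dots,d_i\}$ with $f_i(p_{i,\sigma_i(0)})\le\cdots\le f_i(p_{i,\sigma_i(d_i)})$. Define $h:\operatorname{vert}(\Delta)\to\mathbb{R}$ by $h(\boldsymbol{v}_{1j_1},\dots,\boldsymbol{v}_{nj_n})=\phi(f_1(p_{1,\sigma_1(j_1)}),\dots,f_n(p_{n,\sigma_n(j_n)}))$. Then $h$ is supermodular on $\operatorname{vert}(\Delta)$ with respect to the componentwise order.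
   Context: $\Delta^d=\{\boldsymbol{z}\in\mathbb{R}^d:1\ge z_1\ge\cdots\ge z_d\ge0\}$, $\Delta=\Delta^{d_1}\times\cdots\times\Delta^{d_n}$; the vertices of $\Delta^{d_i}$ are $\boldsymbol{v}_{i0}=\boldsymbol{0}$ and $\boldsymbol{v}_{ij}=\boldsymbol{v}_{i,j-1}+\boldsymbol{e}_{ij}$ (first $j$ coordinates equal to $1$), and $\operatorname{vert}(\Delta)=\prod_i\{\boldsymbol{v}_{i0},\dots,\boldsymbol{v}_{id_i}\}$, which is closed under componentwise max and min. A function $g$ is supermodular if $g(\boldsymbol{u}\vee\boldsymbol{w})+g(\boldsymbol{u}\wedge\boldsymbol{w})\ge g(\boldsymbol{u})+g(\boldsymbol{w})$ for all $\boldsymbol{u},\boldsymbol{w}$ in its domain. *)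

theory Defs
  imports Complex_Main "HOL-Combinatorics.Permutations"
begin

definition supermodular_on :: "'a::lattice set \<Rightarrow> ('a \<Rightarrow> real) \<Rightarrow> bool" where
  "supermodular_on S g \<longleftrightarrow>
     (\<forall>u\<in>S. \<forall>w\<in>S. g (sup u w) + g (inf u w) \<ge> g u + g w)"

text \<open>The vertex v_{ij} of Delta^{d_i}: a vector in R^{d_i} (coordinates 0..d_i-1)
  whose first j coordinates are 1 and the rest 0.\<close>
definition vtx :: "(nat \<Rightarrow> nat) \<Rightarrow> nat \<Rightarrow> nat \<Rightarrow> (nat \<Rightarrow> real)" where
  "vtx d i j = (\<lambda>k\<in>{..<d i}. if k < j then 1 else 0)"

definition vertDelta :: "nat \<Rightarrow> (nat \<Rightarrow> nat) \<Rightarrow> (nat \<Rightarrow> nat \<Rightarrow> real) set" where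
  "vertDelta n d = (\<Pi>\<^sub>E i\<in>{..<n}. vtx d i ` {..d i})"

definition box :: "nat \<Rightarrow> (nat \<Rightarrow> real) \<Rightarrow> (nat \<Rightarrow> real) \<Rightarrow> (nat \<Rightarrow> real) set" where
  "box n L U = (\<Pi>\<^sub>E i\<in>{..<n}. {L i..U i})"

definition hfun :: "nat \<Rightarrow> (nat \<Rightarrow> nat) \<Rightarrow> (nat \<Rightarrow> nat \<Rightarrow> real) \<Rightarrow> (nat \<Rightarrow> real \<Rightarrow> real)
     \<Rightarrow> ((nat \<Rightarrow> real) \<Rightarrow> real) \<Rightarrow> (nat \<Rightarrow> nat \<Rightarrow> nat) \<Rightarrow> (nat \<Rightarrow> nat \<Rightarrow> real) \<Rightarrow> real" where
  "hfun n d p f \<phi> \<sigma> V =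
     \<phi> (\<lambda>i\<in>{..<n}. f i (p i (\<sigma> i (THE j. j \<le> d i \<and> V i = vtx d i j))))"

end

theory Submission
  imports Defs
begin

text \<open>Identify a vertex tuple (v_{1j_1},...,v_{nj_n}) with its index vector (j_1,...,j_n).
  Componentwise max and min of vertices correspond to componentwise max and min of indices,
  and since each f_i(p_{i,sigma_i(-)}) is monotone in j, it commutes with max and min as well.
  Hence h is phi composed with a map that preserves sup and inf, and supermodularity pulls back
  along such maps.\<close>

definition lattice_hom_on :: "'a::lattice set \<Rightarrow> ('a \<Rightarrow> 'b::lattice) \<Rightarrow> bool" where
  "lattice_hom_on S F \<longleftrightarrow>
     (\<forall>u\<in>S. \<forall>w\<in>S. F (sup u w) = sup (F u) (F w) \<and> F (inf u w) = inf (F u) (F w))"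

lemma supermodular_on_comp:
  assumes "supermodular_on T \<phi>" and "F ` S \<subseteq> T" and "lattice_hom_on S F"
  shows "supermodular_on S (\<phi> \<circ> F)"
  using assms unfolding supermodular_on_def lattice_hom_on_def by (simp add: image_subset_iff)

lemma lattice_hom_on_comp:
  assumes "lattice_hom_on S F" and "F ` S \<subseteq> T" and "lattice_hom_on T G"
  shows "lattice_hom_on S (G \<circ> F)"
  using assms unfolding lattice_hom_on_def by (simp add: image_subset_iff)

lemma mono_on_imp_lattice_hom_on:
  fixes g :: "'a::{lattice,linorder} \<Rightarrow> 'b::{lattice,linorder}"
  assumes "mono_on A g"
  shows "lattice_hom_on A g"
  unfolding lattice_hom_on_def sup_max inf_min
proof (intro ballI)
  fix a b assume "a \<in> A" "b \<in> A"
  then show "g (max a b) = max (g a) (g b) \<and> g (min a b) = min (g a) (g b)"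
    using mono_onD[OF assms, of a b] mono_onD[OF assms, of b a]
    by (cases a b rule: le_cases) (auto simp: max_def min_def)
qed

lemma mono_on_atMost_if_Suc_le:
  fixes g :: "nat \<Rightarrow> 'a::order"
  assumes "\<And>m. m < N \<Longrightarrow> g m \<le> g (Suc m)"
  shows "mono_on {..N} g"
proof (rule mono_onI)
  fix a b assume "a \<in> {..N}" "b \<in> {..N}" "a \<le> b"
  show "g a \<le> g b"
  proof (rule lift_Suc_mono_le_ivl[of "{..<N}" g])
    show "{a..<b} \<subseteq> {..<N}" using \<open>b \<in> {..N}\<close> by auto
  qed (use assms \<open>a \<le> b\<close> in auto)
qed

lemma lattice_hom_on_restrict_PiE:
  assumes "\<And>i. i \<in> I \<Longrightarrow> lattice_hom_on (A i) (G i)"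
  shows "lattice_hom_on (PiE I A) (\<lambda>u. \<lambda>i\<in>I. G i (u i))"
  using assms unfolding lattice_hom_on_def by (auto simp: fun_eq_iff PiE_iff)

lemma inj_on_vtx: "inj_on (vtx d i) {..d i}"
proof (rule inj_onI)
  have neq: "vtx d i a \<noteq> vtx d i b" if "a < b" "b \<le> d i" for a b
  proof -
    have "vtx d i a a \<noteq> vtx d i b a" using that by (simp add: vtx_def)
    then show ?thesis by metis
  qed
  fix a b assume "a \<in> {..d i}" "b \<in> {..d i}" "vtx d i a = vtx d i b"
  then show "a = b" using neq neq[symmetric] by (metis atMost_iff linorder_neqE_nat)
qed

lemma sup_vtx: "sup (vtx d i a) (vtx d i b) = vtx d i (max a b)"
  by (auto simp: fun_eq_iff vtx_def sup_max)

lemma inf_vtx: "inf (vtx d i a) (vtx d i b) = vtx d i (min a b)"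
  by (auto simp: fun_eq_iff vtx_def inf_min)

definition vtx_index :: "(nat \<Rightarrow> nat) \<Rightarrow> nat \<Rightarrow> (nat \<Rightarrow> real) \<Rightarrow> nat" where
  "vtx_index d i v = (THE j. j \<le> d i \<and> v = vtx d i j)"

lemma vtx_index_vtx:
  assumes "j \<le> d i"
  shows "vtx_index d i (vtx d i j) = j"
  unfolding vtx_index_def
  using assms inj_onD[OF inj_on_vtx] by (intro the_equality) auto

lemma lattice_hom_on_vtx_index: "lattice_hom_on (vtx d i ` {..d i}) (vtx_index d i)"
  unfolding lattice_hom_on_def
proof (intro ballI)
  fix u w assume "u \<in> vtx d i ` {..d i}" "w \<in> vtx d i ` {..d i}"
  then obtain a b where "a \<le> d i" "b \<le> d i" "u = vtx d i a" "w = vtx d i b" by auto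
  then show "vtx_index d i (sup u w) = sup (vtx_index d i u) (vtx_index d i w) \<and>
      vtx_index d i (inf u w) = inf (vtx_index d i u) (vtx_index d i w)"
    by (simp add: sup_vtx inf_vtx vtx_index_vtx sup_max inf_min)
qed

lemma lattice_hom_on_comp_vtx_index:
  fixes g :: "nat \<Rightarrow> 'a::{lattice,linorder}"
  assumes "mono_on {..d i} g"
  shows "lattice_hom_on (vtx d i ` {..d i}) (g \<circ> vtx_index d i)"
  by (rule lattice_hom_on_comp[OF lattice_hom_on_vtx_index _ mono_on_imp_lattice_hom_on[OF assms]])
    (auto simp: vtx_index_vtx)

theorem mainTheorem11:
  fixes n :: nat and d :: "nat \<Rightarrow> nat" and p :: "nat \<Rightarrow> nat \<Rightarrow> real"
    and f :: "nat \<Rightarrow> real \<Rightarrow> real" and L U :: "nat \<Rightarrow> real"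
    and \<phi> :: "(nat \<Rightarrow> real) \<Rightarrow> real" and \<sigma> :: "nat \<Rightarrow> nat \<Rightarrow> nat"
  assumes "n \<ge> 1"
    and "\<forall>i<n. d i \<ge> 1"
    and "\<forall>i<n. \<forall>j<d i. p i j < p i (Suc j)"
    and "\<forall>i<n. \<forall>j\<le>d i. f i (p i j) \<in> {L i..U i}"
    and "supermodular_on (box n L U) \<phi>"
    and "\<forall>i<n. \<sigma> i permutes {..d i}"
    and "\<forall>i<n. \<forall>j<d i. f i (p i (\<sigma> i j)) \<le> f i (p i (\<sigma> i (Suc j)))"
  shows "supermodular_on (vertDelta n d) (hfun n d p f \<phi> \<sigma>)"
proof -
  define g where "g i j = f i (p i (\<sigma> i j))" for i j
  have hom: "lattice_hom_on (vtx d i ` {..d i}) (g i \<circ> vtx_index d i)" if "i < n" for i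
    using assms(7) that
    by (intro lattice_hom_on_comp_vtx_index mono_on_atMost_if_Suc_le) (simp add: g_def)
  have in_box: "(g i \<circ> vtx_index d i) ` vtx d i ` {..d i} \<subseteq> {L i..U i}" if "i < n" for i
    using assms(4,6) that permutes_in_image[of "\<sigma> i" "{..d i}"] by (auto simp: g_def vtx_index_vtx)
  have "(\<lambda>V. \<lambda>i\<in>{..<n}. (g i \<circ> vtx_index d i) (V i)) ` vertDelta n d \<subseteq> box n L U"
    using in_box unfolding vertDelta_def box_def by (fastforce simp: PiE_iff image_subset_iff)
  moreover have "lattice_hom_on (vertDelta n d) (\<lambda>V. \<lambda>i\<in>{..<n}. (g i \<circ> vtx_index d i) (V i))"
    unfolding vertDelta_def
    using hom by (intro lattice_hom_on_restrict_PiE[where G = "\<lambda>i. g i \<circ> vtx_index d i"]) blast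
  moreover have "hfun n d p f \<phi> \<sigma> = \<phi> \<circ> (\<lambda>V. \<lambda>i\<in>{..<n}. (g i \<circ> vtx_index d i) (V i))"
    by (simp add: fun_eq_iff hfun_def vtx_index_def g_def)
  ultimately show ?thesis
    using supermodular_on_comp[OF assms(5)] by simp
qed

end
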